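(* Let $n\in\mathbb{N}$ and $a\in\mathbb{R}$ with $|a|>5$. Let $\tilde{E}_n(a,1)$ be the $(n+1)\times n$ matrix whose $(i,j)$ entry is $a$ if $i=j$, $1$ if $j=i+1$, $a$ if $i=j+1$, $1$ if $i=j+2$, and $0$ otherwise, and let $\tilde{B}_n(a,1)$ be the $(n+3)\times n$ matrix whose first row is $(1,0,\dots,0)$, whose rows $2,\dots,n+2$ are the rows of $\tilde{E}_n(a,1)$ in order, and whose last row is $(0,\dots,0,1)$. For $1\le i<j<k\le n+3$, let $\tilde{B}_n(a,1)^{i,j,k}$ be the $n\times n$ matrix obtained by deleting the $i$-th, $j$-th and $k$-th rows of $\tilde{B}_n(a,1)$. Then $|\tilde{B}_n(a,1)^{i,j,k}|\neq0$.
   Context: $|M|$ denotes the determinant of a square matrix $M$. *)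

theory Defs
  imports "Jordan_Normal_Form.Determinant" "Jordan_Normal_Form.DL_Submatrix"
begin

text \<open>Entries use 1-based indices as in the paper.
  E_tilde n a is the (n+1) x n matrix with entries a (i=j), 1 (j=i+1), a (i=j+1), 1 (i=j+2), else 0.\<close>

definition E_entry :: "real \<Rightarrow> nat \<Rightarrow> nat \<Rightarrow> real" where
  "E_entry a i j = (if i = j then a else if j = i + 1 then 1
                    else if i = j + 1 then a else if i = j + 2 then 1 else 0)"

definition E_tilde :: "nat \<Rightarrow> real \<Rightarrow> real mat" where
  "E_tilde n a = mat (n + 1) n (\<lambda>(i, j). E_entry a (i + 1) (j + 1))"

definition B_entry :: "nat \<Rightarrow> real \<Rightarrow> nat \<Rightarrow> nat \<Rightarrow> real" where
  "B_entry n a r j = (if r = 1 then (if j = 1 then 1 else 0)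
                      else if r = n + 3 then (if j = n then 1 else 0)
                      else E_entry a (r - 1) j)"

definition B_tilde :: "nat \<Rightarrow> real \<Rightarrow> real mat" where
  "B_tilde n a = mat (n + 3) n (\<lambda>(r, j). B_entry n a (r + 1) (j + 1))"

definition delete_rows3 :: "'a mat \<Rightarrow> nat \<Rightarrow> nat \<Rightarrow> nat \<Rightarrow> 'a mat" where
  "delete_rows3 M i j k = submatrix M (UNIV - {i - 1, j - 1, k - 1}) UNIV"

end

theory Submission
  imports Defs
begin

(* Column c of B_tilde n a holds the coefficients of P(x) = 1 + a x + a x^2 + x^3 shifted
   down by c, so B_tilde n a maps the coefficient vector of a polynomial q of degree < n to
   the coefficient vector of P q. If the matrix with rows i, j, k deleted annihilated a
   nonzero v, then P q would consist of at most the three monomials x^(i-1), x^(j-1),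
   x^(k-1). But P q vanishes at the roots of P = (1 + x) (x^2 + (a - 1) x + 1), which are
   -1, r and 1/r with |r| > 1 once |a - 1| > 2, and the generalised Vandermonde system of
   these three points is nonsingular. Hence P q = 0, so q = 0. *)

definition poly_mult_mat :: "nat \<Rightarrow> nat \<Rightarrow> 'a :: zero poly \<Rightarrow> 'a mat" where
  "poly_mult_mat m n p = mat m n (\<lambda>(r, c). if c \<le> r then coeff p (r - c) else 0)"

lemma coeff_Poly_list_of_vec:
  "coeff (Poly (list_of_vec v)) c = (if c < dim_vec v then v $ c else 0)"
  by (simp add: nth_default_def)

lemma Poly_list_of_vec_eq_0_iff:
  assumes "v \<in> carrier_vec n"
  shows "Poly (list_of_vec v) = 0 \<longleftrightarrow> v = 0\<^sub>v n"
proof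
  assume "Poly (list_of_vec v) = 0"
  then have "v $ c = 0" if "c < n" for c
    using that assms coeff_Poly_list_of_vec[of v c] by simp
  then show "v = 0\<^sub>v n"
    using assms by (intro eq_vecI) auto
qed simp

lemma coeff_mult_Poly_list_of_vec:
  assumes "v \<in> carrier_vec n"
  shows "coeff (p * Poly (list_of_vec v)) r
           = (\<Sum>c<n. (if c \<le> r then coeff p (r - c) else 0) * v $ c)"
proof -
  have "coeff (p * Poly (list_of_vec v)) r
          = (\<Sum>c\<le>r. coeff (Poly (list_of_vec v)) c * coeff p (r - c))"
    by (simp add: mult.commute[of p] coeff_mult)
  also have "\<dots> = (\<Sum>c\<le>r. if c \<in> {..<n} then v $ c * coeff p (r - c) else 0)"
    using assms by (intro sum.cong) (auto simp: nth_default_def)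
  also have "\<dots> = (\<Sum>c\<in>{..r} \<inter> {..<n}. v $ c * coeff p (r - c))"
    by (simp only: sum.inter_restrict[OF finite_atMost])
  also have "\<dots> = (\<Sum>c<n. if c \<in> {..r} then v $ c * coeff p (r - c) else 0)"
    by (simp only: Int_commute[of "{..r}"] sum.inter_restrict[OF finite_lessThan])
  also have "\<dots> = (\<Sum>c<n. (if c \<le> r then coeff p (r - c) else 0) * v $ c)"
    by (intro sum.cong) (auto simp: mult.commute)
  finally show ?thesis .
qed

lemma poly_mult_mat_mult_vec:
  assumes "v \<in> carrier_vec n" "r < m"
  shows "(poly_mult_mat m n p *\<^sub>v v) $ r = coeff (p * Poly (list_of_vec v)) r"
  using assms
  by (simp add: coeff_mult_Poly_list_of_vec poly_mult_mat_def scalar_prod_def lessThan_atLeast0)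

lemma coeff_mult_Poly_list_of_vec_beyond:
  assumes "v \<in> carrier_vec n" "degree p + n \<le> r"
  shows "coeff (p * Poly (list_of_vec v)) r = 0"
  using assms by (simp add: coeff_mult_Poly_list_of_vec coeff_eq_0)

lemma submatrix_mult_mat_vec_eq_0:
  assumes A: "A \<in> carrier_mat m n" and v: "v \<in> carrier_vec n"
    and ker: "submatrix A I UNIV *\<^sub>v v = 0\<^sub>v k"
    and r: "r < m" "r \<in> I"
  shows "(A *\<^sub>v v) $ r = 0"
proof -
  let ?s = "card {x \<in> I. x < r}"
  have "{x \<in> I. x < r} \<subset> {x. x < dim_row A \<and> x \<in> I}"
    using A r by auto
  then have s: "?s < dim_row (submatrix A I UNIV)"
    by (simp add: dim_submatrix psubset_card_mono)
  have cols: "dim_col (submatrix A I UNIV) = n"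
    using A by (simp add: dim_submatrix)
  have "(submatrix A I UNIV *\<^sub>v v) $ ?s = (A *\<^sub>v v) $ r"
    using s cols A v r submatrix_index_card[of r A _ I UNIV]
    by (simp add: scalar_prod_def)
  moreover have "?s < k"
    using s arg_cong[OF ker, of dim_vec] by simp
  ultimately show ?thesis
    using ker by simp
qed

lemma submatrix_delete_rows_carrier_mat:
  assumes "A \<in> carrier_mat m n" "D \<subseteq> {..<m}"
  shows "submatrix A (UNIV - D) UNIV \<in> carrier_mat (m - card D) n"
proof (rule carrier_matI)
  have "{r. r < dim_row A \<and> r \<in> UNIV - D} = {..<m} - D"
    using assms(1) by auto
  then show "dim_row (submatrix A (UNIV - D) UNIV) = m - card D"
    using assms(2) by (simp only: dim_submatrix card_lessThan finite_lessThan
        card_Diff_subset finite_subset[OF assms(2)])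
  show "dim_col (submatrix A (UNIV - D) UNIV) = n"
    using assms(1) by (simp add: dim_submatrix)
qed

lemma delete_rows3_carrier_mat:
  assumes "A \<in> carrier_mat m n" "1 \<le> i" "i < j" "j < k" "k \<le> m"
  shows "delete_rows3 A i j k \<in> carrier_mat (m - 3) n"
proof -
  have "i - 1 \<noteq> j - 1" "i - 1 \<noteq> k - 1" "j - 1 \<noteq> k - 1"
    using assms(2-4) by auto
  then have "card {i - 1, j - 1, k - 1} = 3"
    by simp
  moreover have "{i - 1, j - 1, k - 1} \<subseteq> {..<m}"
    using assms(2-5) by auto
  ultimately show ?thesis
    unfolding delete_rows3_def using submatrix_delete_rows_carrier_mat[OF assms(1)] by metis
qed

lemma coeff_mult_Poly_submatrix_kernel:
  assumes "degree p + n \<le> m" "v \<in> carrier_vec n"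
    and "submatrix (poly_mult_mat m n p) I UNIV *\<^sub>v v = 0\<^sub>v k" "e \<in> I"
  shows "coeff (p * Poly (list_of_vec v)) e = 0"
proof (cases "e < m")
  case True
  then have "(poly_mult_mat m n p *\<^sub>v v) $ e = 0"
    using assms by (intro submatrix_mult_mat_vec_eq_0) (auto simp: poly_mult_mat_def)
  then show ?thesis
    using True assms(2) by (simp add: poly_mult_mat_mult_vec)
next
  case False
  then show ?thesis
    using assms(1,2) by (intro coeff_mult_Poly_list_of_vec_beyond) auto
qed

lemma homogeneous_system3_trivial:
  fixes x1 x2 x3 y1 y2 y3 c0 c1 c2 :: "'a :: field"
  assumes det: "(x2 * y3 - x3 * y2) - (x1 * y3 - x3 * y1) + (x1 * y2 - x2 * y1) \<noteq> 0"
    and eq1: "c0 + c1 * x1 + c2 * y1 = 0"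
    and eq2: "c0 + c1 * x2 + c2 * y2 = 0"
    and eq3: "c0 + c1 * x3 + c2 * y3 = 0"
  shows "c0 = 0 \<and> c1 = 0 \<and> c2 = 0"
proof -
  let ?D = "(x2 * y3 - x3 * y2) - (x1 * y3 - x3 * y1) + (x1 * y2 - x2 * y1)"
  let ?e1 = "c0 + c1 * x1 + c2 * y1" and ?e2 = "c0 + c1 * x2 + c2 * y2"
    and ?e3 = "c0 + c1 * x3 + c2 * y3"
  have "?D * c0 = (x2 * y3 - x3 * y2) * ?e1 - (x1 * y3 - x3 * y1) * ?e2
                   + (x1 * y2 - x2 * y1) * ?e3"
    "?D * c1 = (y2 - y3) * ?e1 - (y1 - y3) * ?e2 + (y1 - y2) * ?e3"
    "?D * c2 = (x3 - x2) * ?e1 - (x3 - x1) * ?e2 + (x2 - x1) * ?e3"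
    by (simp_all add: algebra_simps)
  then have "?D * c0 = 0" "?D * c1 = 0" "?D * c2 = 0"
    by (simp_all only: eq1 eq2 eq3 mult_zero_right diff_zero add_0)
  then show ?thesis
    using det by simp
qed

lemma reciprocal_det3_factorization:
  fixes u w \<sigma> \<tau> :: "'a :: field"
  assumes "\<sigma> = 1 \<or> \<sigma> = -1" "\<tau> = 1 \<or> \<tau> = -1" "u \<noteq> 0" "w \<noteq> 0"
  shows "((u / w - w / u) - (\<sigma> / w - \<tau> / u) + (\<sigma> * w - u * \<tau>)) * (u * w)
           = \<sigma> * (w - \<sigma> * \<tau> * u) * (u - \<sigma>) * (w - \<tau>)"
proof -
  have "((u / w - w / u) - (\<sigma> / w - \<tau> / u) + (\<sigma> * w - u * \<tau>)) * (u * w)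
          = u * u - w * w - \<sigma> * u + \<tau> * w + \<sigma> * u * w * w - \<tau> * u * u * w"
    using assms(3,4) by (simp add: field_simps)
  also have "\<dots> = \<sigma> * (w - \<sigma> * \<tau> * u) * (u - \<sigma>) * (w - \<tau>)"
    using assms(1,2) by (elim disjE) (simp_all add: algebra_simps)
  finally show ?thesis .
qed

lemma reciprocal_trinomial_eq_0:
  fixes r c0 c1 c2 :: real
  assumes JK: "0 < J" "J < K" and r: "1 < \<bar>r\<bar>"
    and vanish: "\<And>x. x \<in> {-1, r, 1 / r} \<Longrightarrow> c0 + c1 * x^J + c2 * x^K = 0"
  shows "c0 = 0 \<and> c1 = 0 \<and> c2 = 0"
proof (rule homogeneous_system3_trivial)
  define u w \<sigma> \<tau> where "u = r^J" and "w = r^K"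
    and "\<sigma> = (-1 :: real)^J" and "\<tau> = (-1 :: real)^K"
  have u: "1 < \<bar>u\<bar>" and uw: "\<bar>u\<bar> < \<bar>w\<bar>"
    using JK r by (simp_all add: u_def w_def power_abs power_strict_increasing)
  have \<sigma>\<tau>: "\<sigma> = 1 \<or> \<sigma> = -1" "\<tau> = 1 \<or> \<tau> = -1"
    unfolding \<sigma>_def \<tau>_def by (cases "even J"; simp) (cases "even K"; simp)
  then have "((u / w - w / u) - (\<sigma> / w - \<tau> / u) + (\<sigma> * w - u * \<tau>)) * (u * w)
               = \<sigma> * (w - \<sigma> * \<tau> * u) * (u - \<sigma>) * (w - \<tau>)"
    using u uw by (intro reciprocal_det3_factorization) auto
  moreover have "\<sigma> * (w - \<sigma> * \<tau> * u) * (u - \<sigma>) * (w - \<tau>) \<noteq> 0"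
    using u uw \<sigma>\<tau> by auto
  ultimately show "(u * (1 / w) - (1 / u) * w) - (\<sigma> * (1 / w) - (1 / u) * \<tau>)
                     + (\<sigma> * w - u * \<tau>) \<noteq> 0"
    by auto
  show "c0 + c1 * \<sigma> + c2 * \<tau> = 0"
    using vanish[of "-1"] by (simp add: \<sigma>_def \<tau>_def)
  show "c0 + c1 * u + c2 * w = 0"
    using vanish[of r] by (simp add: u_def w_def)
  show "c0 + c1 * (1 / u) + c2 * (1 / w) = 0"
    using vanish[of "1 / r"] by (simp add: u_def w_def power_one_over)
qed

lemma three_term_poly_eq_0:
  fixes f :: "real poly"
  assumes IJK: "I < J" "J < K" and r: "1 < \<bar>r\<bar>"
    and supp: "\<And>e. e \<notin> {I, J, K} \<Longrightarrow> coeff f e = 0"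
    and roots: "\<And>x. x \<in> {-1, r, 1 / r} \<Longrightarrow> poly f x = 0"
  shows "f = 0"
proof -
  let ?c0 = "coeff f I" and ?c1 = "coeff f J" and ?c2 = "coeff f K"
  have f: "f = monom ?c0 I + monom ?c1 J + monom ?c2 K"
    by (rule poly_eqI) (use supp IJK in \<open>auto\<close>)
  have "?c0 + ?c1 * x^(J - I) + ?c2 * x^(K - I) = 0" if x: "x \<in> {-1, r, 1 / r}" for x
  proof -
    have "x^J = x^I * x^(J - I)" "x^K = x^I * x^(K - I)"
      using IJK by (simp_all flip: power_add)
    then have "poly f x = x^I * (?c0 + ?c1 * x^(J - I) + ?c2 * x^(K - I))"
      by (subst f) (simp add: poly_monom algebra_simps)
    moreover have "x \<noteq> 0"
      using x r by auto
    ultimately show ?thesis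
      using roots[OF x] by simp
  qed
  then have "?c0 = 0 \<and> ?c1 = 0 \<and> ?c2 = 0"
    using IJK r by (intro reciprocal_trinomial_eq_0[of "J - I" "K - I" r]) auto
  then show ?thesis
    by (subst f) simp
qed

lemma palindromic_quadratic_large_root:
  fixes c :: real
  assumes "2 < \<bar>c\<bar>"
  shows "\<exists>x. 1 < \<bar>x\<bar> \<and> x^2 + c * x + 1 = 0"
proof -
  define d where "d = sqrt (c^2 - 4)"
  define t where "t = (\<bar>c\<bar> + d) / 2"
  have "2^2 < \<bar>c\<bar>^2"
    using assms by (intro power_strict_mono) auto
  then have d: "0 \<le> d" "d^2 = c^2 - 4"
    by (simp_all add: d_def)
  have "1 < t"
    using assms d by (simp add: t_def)
  moreover have "t^2 - \<bar>c\<bar> * t + 1 = 0"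
    using d by (simp add: t_def power2_eq_square field_simps)
  ultimately show ?thesis
    by (cases "0 < c") (auto intro!: exI[of _ "if 0 < c then - t else t"])
qed

lemma palindromic_quadratic_root_inverse:
  fixes x c :: "'a :: field"
  assumes "x^2 + c * x + 1 = 0"
  shows "(1 / x)^2 + c * (1 / x) + 1 = 0"
proof -
  have "x \<noteq> 0"
    using assms by auto
  then have "(1 / x)^2 + c * (1 / x) + 1 = (x^2 + c * x + 1) / x^2"
    by (simp add: field_simps power2_eq_square)
  then show ?thesis
    using assms by simp
qed

definition B_poly :: "'a :: comm_ring_1 \<Rightarrow> 'a poly" where
  "B_poly a = [:1, a, a, 1:]"

lemma coeff_B_poly:
  "coeff (B_poly a) e = (if e = 0 \<or> e = 3 then 1 else if e = 1 \<or> e = 2 then a else 0)"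
  by (cases e; cases "e - 1"; cases "e - 2"; cases "e - 3")
    (auto simp: B_poly_def coeff_pCons numeral_eq_Suc)

lemma degree_B_poly: "degree (B_poly a) = 3"
  by (simp add: B_poly_def)

lemma B_poly_nonzero: "B_poly a \<noteq> 0"
  by (simp add: B_poly_def)

lemma poly_B_poly: "poly (B_poly a) x = (1 + x) * (x^2 + (a - 1) * x + 1)"
  by (simp add: B_poly_def algebra_simps power2_eq_square)

lemma B_entry_Suc_Suc:
  assumes "r < n + 3" "c < n"
  shows "B_entry n a (Suc r) (Suc c) = (if c \<le> r then coeff (B_poly a) (r - c) else 0)"
proof -
  consider "r < c" | "r = c" | "r = c + 1" | "r = c + 2" | "r = c + 3" | "c + 4 \<le> r"
    by linarith
  then show ?thesis
    using assms by cases (simp_all add: B_entry_def E_entry_def coeff_B_poly, linarith)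
qed

lemma B_tilde_eq_poly_mult_mat: "B_tilde n a = poly_mult_mat (n + 3) n (B_poly a)"
  by (rule eq_matI) (simp_all add: B_tilde_def poly_mult_mat_def B_entry_Suc_Suc)

theorem proposition5p2:
  fixes n :: nat and a :: real and i j k :: nat
  assumes "\<bar>a\<bar> > 5"
    and "1 \<le> i" and "i < j" and "j < k" and "k \<le> n + 3"
  shows "det (delete_rows3 (B_tilde n a) i j k) \<noteq> 0"
proof
  assume "det (delete_rows3 (B_tilde n a) i j k) = 0"
  moreover have "delete_rows3 (B_tilde n a) i j k \<in> carrier_mat n n"
    using delete_rows3_carrier_mat[of "B_tilde n a" "n + 3" n] assms by (simp add: B_tilde_def)
  ultimately obtain v where v: "v \<in> carrier_vec n" "v \<noteq> 0\<^sub>v n"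
    and ker: "delete_rows3 (B_tilde n a) i j k *\<^sub>v v = 0\<^sub>v n"
    using det_0_iff_vec_prod_zero by blast
  define f where "f = B_poly a * Poly (list_of_vec v)"
  have supp: "coeff f e = 0" if "e \<notin> {i - 1, j - 1, k - 1}" for e
    using ker v(1) that unfolding f_def delete_rows3_def B_tilde_eq_poly_mult_mat
    by (intro coeff_mult_Poly_submatrix_kernel[where m = "n + 3" and k = n])
      (auto simp: degree_B_poly)
  have "2 < \<bar>a - 1\<bar>"
    using assms(1) by arith
  then obtain r where r: "1 < \<bar>r\<bar>" "r^2 + (a - 1) * r + 1 = 0"
    using palindromic_quadratic_large_root by blast
  have "poly f x = 0" if "x \<in> {-1, r, 1 / r}" for x
    using that r(2) palindromic_quadratic_root_inverse[OF r(2)] by (auto simp: f_def poly_B_poly)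
  then have "f = 0"
    using three_term_poly_eq_0[of "i - 1" "j - 1" "k - 1" r f] supp r(1) assms by auto
  then have "v = 0\<^sub>v n"
    using Poly_list_of_vec_eq_0_iff[OF v(1)] by (simp add: f_def B_poly_nonzero)
  with v(2) show False ..
qed

end
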